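(* Let $n,T\in\mathbb{N}$. For $i=1,\dots,n$ and $t=1,\dots,T$ let $X_i(t),Y_i(t)$ be integrable real random variables, let $a_i\ge 0$ be fixed constants, and let $\beta_{\text{a}}(t)\in[0,1]$. Let $\pi_{\text{B}},\pi_{\text{in}}$ be real constants and $\pi_{\text{out}},\pi_{\text{grid}},\pi_{\text{rev}}$ constants with $\pi_{\text{grid}}\ge 0$, $\pi_{\text{rev}}\ge 0$. For $(C_{\text{a},1},\dots,C_{\text{a},n})\in[0,\infty)^n$ put $C_{\text{a}}=\sum_{i=1}^n C_{\text{a},i}$, $$P_{\text{in}}(t)=\sum_{i=1}^n\max\{a_iY_i(t)-X_i(t),0\},\qquad P_{\text{out}}(t)=\sum_{i=1}^n\min\{\max\{X_i(t)-a_iY_i(t),0\},\,C_{\text{a},i}\},$$ and $$J_{\text{a}}=\pi_{\text{B}}\sum_{i=1}^nC_{\text{a},i}+\sum_{t=1}^T\mathbb{E}\Big[\pi_{\text{in}}P_{\text{in}}(t)-\pi_{\text{out}}P_{\text{out}}(t)+\pi_{\text{grid}}\max\{P_{\text{out}}(t)-P_{\text{in}}(t)-\beta_{\text{a}}(t)C_{\text{a}},0\}+\pi_{\text{rev}}\max\{P_{\text{in}}(t)-P_{\text{out}}(t)-(1-\beta_{\text{a}}(t))C_{\text{a}},0\}\Big].$$ If $\pi_{\text{out}}\ge\pi_{\text{grid}}$, then $J_{\text{a}}$ is convex with respect to $(C_{\text{a},1},\dots,C_{\text{a},n})$.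
   Context: This is the cost of a manager who owns a joint battery of capacity $C_{\text{a}}$, allocated as daily purchase limits $C_{\text{a},i}$ to $n$ users; $a_i$ are the users' PV panel areas, $X_i(t)$ their daily consumption, $Y_i(t)$ the PV generation per unit area, $P_{\text{in}}(t)$ and $P_{\text{out}}(t)$ the total power bought from and sold to users, $\beta_{\text{a}}(t)C_{\text{a}}$ the stored power at the start of day $t$, $\pi_{\text{in}},\pi_{\text{out}}$ the buying and selling prices, $\pi_{\text{grid}}$ the price of power from the main grid, $\pi_{\text{rev}}$ the reverse-flow penalty, $\pi_{\text{B}}$ the unit storage cost. *)

theory Defs
  imports "HOL-Analysis.Analysis" "HOL-Probability.Probability"
begin

text \<open>Users are indexed by a finite type 'n (so n = CARD('n)); days by t in {1..T}.
  Allocation vector Ca :: real^'n, component Ca $ i is C_{a,i}.\<close>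

definition P_in :: "('n::finite \<Rightarrow> real) \<Rightarrow> ('n \<Rightarrow> nat \<Rightarrow> 'a \<Rightarrow> real) \<Rightarrow> ('n \<Rightarrow> nat \<Rightarrow> 'a \<Rightarrow> real) \<Rightarrow> nat \<Rightarrow> 'a \<Rightarrow> real" where
  "P_in a X Y t \<omega> = (\<Sum>i\<in>UNIV. max (a i * Y i t \<omega> - X i t \<omega>) 0)"

definition P_out :: "('n::finite \<Rightarrow> real) \<Rightarrow> ('n \<Rightarrow> nat \<Rightarrow> 'a \<Rightarrow> real) \<Rightarrow> ('n \<Rightarrow> nat \<Rightarrow> 'a \<Rightarrow> real) \<Rightarrow> real^'n \<Rightarrow> nat \<Rightarrow> 'a \<Rightarrow> real" where
  "P_out a X Y Ca t \<omega> = (\<Sum>i\<in>UNIV. min (max (X i t \<omega> - a i * Y i t \<omega>) 0) (Ca $ i))"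

definition J_a :: "'a measure \<Rightarrow> nat \<Rightarrow> ('n::finite \<Rightarrow> real) \<Rightarrow> ('n \<Rightarrow> nat \<Rightarrow> 'a \<Rightarrow> real) \<Rightarrow> ('n \<Rightarrow> nat \<Rightarrow> 'a \<Rightarrow> real)
   \<Rightarrow> (nat \<Rightarrow> real) \<Rightarrow> real \<Rightarrow> real \<Rightarrow> real \<Rightarrow> real \<Rightarrow> real \<Rightarrow> real^'n \<Rightarrow> real" where
  "J_a M T a X Y \<beta> \<pi>B \<pi>in \<pi>out \<pi>grid \<pi>rev Ca =
     \<pi>B * (\<Sum>i\<in>UNIV. Ca $ i) +
     (\<Sum>t=1..T. integral\<^sup>L M (\<lambda>\<omega>.
        \<pi>in * P_in a X Y t \<omega> - \<pi>out * P_out a X Y Ca t \<omega>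
        + \<pi>grid * max (P_out a X Y Ca t \<omega> - P_in a X Y t \<omega> - \<beta> t * (\<Sum>i\<in>UNIV. Ca $ i)) 0
        + \<pi>rev * max (P_in a X Y t \<omega> - P_out a X Y Ca t \<omega> - (1 - \<beta> t) * (\<Sum>i\<in>UNIV. Ca $ i)) 0))"

end

theory Submission
  imports Defs
begin

text \<open>For a fixed day t and outcome \<omega>, P_out is a sum of functions min D_i C_i and hence
  concave in the allocation, P_in does not depend on it, and C_a is linear in it. Rewriting the
  grid term with max u 0 = u + max (- u) 0, the daily cost becomes a constant plus
  (\<pi>_out - \<pi>_grid) (- P_out) plus linear terms plus nonnegative multiples of positive parts of
  (affine - P_out); each of these is convex once \<pi>_out \<ge> \<pi>_grid \<ge> 0 and \<pi>_rev \<ge> 0.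
  Expectations and sums preserve convexity, so J_a is in fact convex on all of R^n.\<close>

lemma convex_on_max:
  assumes "convex_on S f" and "convex_on S g"
  shows "convex_on S (\<lambda>x. max (f x) (g x))"
proof (rule convex_onI)
  show "convex S"
    using assms(1) by (rule convex_on_imp_convex)
  fix t :: real and x y
  assume t: "0 < t" "t < 1" and xy: "x \<in> S" "y \<in> S"
  have "f ((1 - t) *\<^sub>R x + t *\<^sub>R y) \<le> (1 - t) * max (f x) (g x) + t * max (f y) (g y)"
    using convex_onD[OF assms(1), of t x y] t xy
    by (smt (verit) max.cobounded1 mult_left_mono)
  moreover have "g ((1 - t) *\<^sub>R x + t *\<^sub>R y) \<le> (1 - t) * max (f x) (g x) + t * max (f y) (g y)"
    using convex_onD[OF assms(2), of t x y] t xy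
    by (smt (verit) max.cobounded2 mult_left_mono)
  ultimately show "max (f ((1 - t) *\<^sub>R x + t *\<^sub>R y)) (g ((1 - t) *\<^sub>R x + t *\<^sub>R y))
      \<le> (1 - t) * max (f x) (g x) + t * max (f y) (g y)"
    by simp
qed

lemma concave_on_min:
  assumes "concave_on S f" and "concave_on S g"
  shows "concave_on S (\<lambda>x. min (f x) (g x))"
  using convex_on_max[of S "\<lambda>x. - f x" "\<lambda>x. - g x"] assms
  by (simp add: concave_on_def minus_min_eq_max)

lemma convex_on_scaled_linear:
  fixes f :: "'a::real_vector \<Rightarrow> real"
  assumes "linear f" and "convex S"
  shows "convex_on S (\<lambda>x. c * f x)"
proof -
  have "f (u *\<^sub>R x + v *\<^sub>R y) = u * f x + v * f y" for u v x y
    using assms(1) by (simp add: linear_add linear_scale)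
  then show ?thesis
    using assms(2) by (simp add: convex_on_def distrib_left mult.left_commute)
qed

lemma convex_on_sum_fun:
  assumes "finite I" and "convex S" and "\<And>i. i \<in> I \<Longrightarrow> convex_on S (f i)"
  shows "convex_on S (\<lambda>x. \<Sum>i\<in>I. f i x)"
  using assms by (induction I rule: finite_induct) (auto simp: convex_on_const)

lemma concave_on_sum_fun:
  assumes "finite I" and "convex S" and "\<And>i. i \<in> I \<Longrightarrow> concave_on S (f i)"
  shows "concave_on S (\<lambda>x. \<Sum>i\<in>I. f i x)"
  using convex_on_sum_fun[of I S "\<lambda>i x. - f i x"] assms
  by (simp add: concave_on_def sum_negf)

lemma convex_on_integral:
  fixes f :: "'b::real_vector \<Rightarrow> 'a \<Rightarrow> real"
  assumes "convex S"
    and "\<And>x. x \<in> S \<Longrightarrow> integrable M (f x)"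
    and "\<And>\<omega>. \<omega> \<in> space M \<Longrightarrow> convex_on S (\<lambda>x. f x \<omega>)"
  shows "convex_on S (\<lambda>x. integral\<^sup>L M (f x))"
proof (rule convex_onI)
  fix t :: real and x y
  assume t: "0 < t" "t < 1" and xy: "x \<in> S" "y \<in> S"
  have "(1 - t) *\<^sub>R x + t *\<^sub>R y \<in> S"
    using assms(1) t xy by (simp add: convex_alt)
  then have "integral\<^sup>L M (f ((1 - t) *\<^sub>R x + t *\<^sub>R y))
      \<le> integral\<^sup>L M (\<lambda>\<omega>. (1 - t) * f x \<omega> + t * f y \<omega>)"
    using assms(2,3) xy t by (intro integral_mono) (auto intro!: convex_onD)
  also have "\<dots> = (1 - t) * integral\<^sup>L M (f x) + t * integral\<^sup>L M (f y)"
    using assms(2) xy by simp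
  finally show "integral\<^sup>L M (f ((1 - t) *\<^sub>R x + t *\<^sub>R y))
      \<le> (1 - t) * integral\<^sup>L M (f x) + t * integral\<^sup>L M (f y)" .
qed (fact assms(1))

lemma convex_on_imbalance_cost:
  fixes g \<sigma> :: "'a::real_vector \<Rightarrow> real"
  assumes g: "concave_on S g" and \<sigma>: "linear \<sigma>"
    and "0 \<le> \<pi>grid" and "\<pi>grid \<le> \<pi>out" and "0 \<le> \<pi>rev"
  shows "convex_on S (\<lambda>x. \<pi>in * p - \<pi>out * g x
           + \<pi>grid * max (g x - p - \<beta> * \<sigma> x) 0
           + \<pi>rev * max (p - g x - (1 - \<beta>) * \<sigma> x) 0)"
proof -
  have S: "convex S"
    using g by (rule concave_on_imp_convex)
  have neg_g: "convex_on S (\<lambda>x. - g x)"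
    using g by (simp add: concave_on_def)
  have linear_term: "convex_on S (\<lambda>x. c * \<sigma> x)" for c
    using \<sigma> S by (rule convex_on_scaled_linear)
  have shortfall: "convex_on S (\<lambda>x. max (c * \<sigma> x + d - g x) 0)" for c d
    using S g \<sigma>
    by (intro convex_on_max convex_on_diff convex_on_add convex_on_scaled_linear)
      (simp_all add: convex_on_const)
  have excess_split:
    "max (g x - p - \<beta> * \<sigma> x) 0 = (g x - p - \<beta> * \<sigma> x) + max (\<beta> * \<sigma> x + p - g x) 0" for x
    by (simp add: max_def)
  have cost_eq: "(\<lambda>x. \<pi>in * p - \<pi>out * g x
           + \<pi>grid * max (g x - p - \<beta> * \<sigma> x) 0
           + \<pi>rev * max (p - g x - (1 - \<beta>) * \<sigma> x) 0)
    = (\<lambda>x. (\<pi>in - \<pi>grid) * p + (\<pi>out - \<pi>grid) * - g x + (- \<pi>grid * \<beta>) * \<sigma> x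
           + \<pi>grid * max (\<beta> * \<sigma> x + p - g x) 0
           + \<pi>rev * max ((\<beta> - 1) * \<sigma> x + p - g x) 0)"
    unfolding excess_split by (simp add: algebra_simps)
  show ?thesis
    unfolding cost_eq using S assms(3-5)
    by (intro convex_on_add linear_term convex_on_cmul[OF _ neg_g] convex_on_cmul[OF _ shortfall])
      (simp_all add: convex_on_const)
qed

lemma linear_sum_components: "linear (\<lambda>x::real^'n. \<Sum>i\<in>UNIV. x $ i)"
  by (intro linearI) (simp_all add: sum.distrib sum_distrib_left)

lemma concave_on_P_out: "concave_on UNIV (\<lambda>Ca. P_out a X Y Ca t \<omega>)"
  unfolding P_out_def
  by (intro concave_on_sum_fun concave_on_min) (simp_all add: concave_on_const concave_on_iff)

lemma integrable_P_in:
  assumes "\<And>i. integrable M (X i t)" and "\<And>i. integrable M (Y i t)"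
  shows "integrable M (P_in a X Y t)"
  unfolding P_in_def[abs_def] using assms
  by (intro Bochner_Integration.integrable_sum integrable_max Bochner_Integration.integrable_diff
      integrable_mult_right integrable_zero)

lemma integrable_P_out:
  assumes "finite_measure M"
    and "\<And>i. integrable M (X i t)" and "\<And>i. integrable M (Y i t)"
  shows "integrable M (P_out a X Y Ca t)"
proof -
  have const: "integrable M (\<lambda>\<omega>. c)" for c :: real
    using assms(1) by (rule finite_measure.integrable_const)
  show ?thesis
    unfolding P_out_def[abs_def] using assms(2,3)
    by (intro Bochner_Integration.integrable_sum integrable_min integrable_max
        Bochner_Integration.integrable_diff integrable_mult_right const)
qed

definition daily_cost :: "('n::finite \<Rightarrow> real) \<Rightarrow> ('n \<Rightarrow> nat \<Rightarrow> 'a \<Rightarrow> real) \<Rightarrow> ('n \<Rightarrow> nat \<Rightarrow> 'a \<Rightarrow> real)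
   \<Rightarrow> (nat \<Rightarrow> real) \<Rightarrow> real \<Rightarrow> real \<Rightarrow> real \<Rightarrow> real \<Rightarrow> real^'n \<Rightarrow> nat \<Rightarrow> 'a \<Rightarrow> real" where
  "daily_cost a X Y \<beta> \<pi>in \<pi>out \<pi>grid \<pi>rev Ca t \<omega> =
     \<pi>in * P_in a X Y t \<omega> - \<pi>out * P_out a X Y Ca t \<omega>
     + \<pi>grid * max (P_out a X Y Ca t \<omega> - P_in a X Y t \<omega> - \<beta> t * (\<Sum>i\<in>UNIV. Ca $ i)) 0
     + \<pi>rev * max (P_in a X Y t \<omega> - P_out a X Y Ca t \<omega> - (1 - \<beta> t) * (\<Sum>i\<in>UNIV. Ca $ i)) 0"

lemma J_a_eq_daily_cost:
  "J_a M T a X Y \<beta> \<pi>B \<pi>in \<pi>out \<pi>grid \<pi>rev = (\<lambda>Ca. \<pi>B * (\<Sum>i\<in>UNIV. Ca $ i)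
     + (\<Sum>t=1..T. integral\<^sup>L M (daily_cost a X Y \<beta> \<pi>in \<pi>out \<pi>grid \<pi>rev Ca t)))"
  by (intro ext) (simp add: J_a_def daily_cost_def[abs_def])

lemma convex_on_daily_cost:
  assumes "0 \<le> \<pi>grid" and "\<pi>grid \<le> \<pi>out" and "0 \<le> \<pi>rev"
  shows "convex_on UNIV (\<lambda>Ca. daily_cost a X Y \<beta> \<pi>in \<pi>out \<pi>grid \<pi>rev Ca t \<omega>)"
  unfolding daily_cost_def
  using convex_on_imbalance_cost[OF concave_on_P_out linear_sum_components assms] by simp

lemma integrable_daily_cost:
  assumes "finite_measure M"
    and "\<And>i. integrable M (X i t)" and "\<And>i. integrable M (Y i t)"
  shows "integrable M (daily_cost a X Y \<beta> \<pi>in \<pi>out \<pi>grid \<pi>rev Ca t)"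
proof -
  have const: "integrable M (\<lambda>\<omega>. c)" for c :: real
    using assms(1) by (rule finite_measure.integrable_const)
  show ?thesis
    unfolding daily_cost_def[abs_def] using assms
    by (intro Bochner_Integration.integrable_add Bochner_Integration.integrable_diff
        integrable_mult_right integrable_max integrable_P_in integrable_P_out const)
qed

lemma convex_on_J_a:
  assumes "finite_measure M"
    and "\<And>i t. t \<in> {1..T} \<Longrightarrow> integrable M (X i t)"
    and "\<And>i t. t \<in> {1..T} \<Longrightarrow> integrable M (Y i t)"
    and "0 \<le> \<pi>grid" and "\<pi>grid \<le> \<pi>out" and "0 \<le> \<pi>rev"
  shows "convex_on UNIV (J_a M T a X Y \<beta> \<pi>B \<pi>in \<pi>out \<pi>grid \<pi>rev)"
  unfolding J_a_eq_daily_cost using assms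
  by (intro convex_on_add convex_on_scaled_linear linear_sum_components convex_on_sum_fun
      convex_on_integral convex_on_daily_cost integrable_daily_cost) auto

theorem lemma3:
  fixes M :: "'a measure" and T :: nat
    and a :: "'n::finite \<Rightarrow> real"
    and X Y :: "'n \<Rightarrow> nat \<Rightarrow> 'a \<Rightarrow> real"
    and \<beta> :: "nat \<Rightarrow> real"
    and \<pi>B \<pi>in \<pi>out \<pi>grid \<pi>rev :: real
  assumes "prob_space M"
    and "\<And>i t. t \<in> {1..T} \<Longrightarrow> integrable M (X i t)"
    and "\<And>i t. t \<in> {1..T} \<Longrightarrow> integrable M (Y i t)"
    and "\<And>i. a i \<ge> 0"
    and "\<And>t. t \<in> {1..T} \<Longrightarrow> 0 \<le> \<beta> t \<and> \<beta> t \<le> 1"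
    and "\<pi>grid \<ge> 0" and "\<pi>rev \<ge> 0"
    and "\<pi>out \<ge> \<pi>grid"
  shows "convex_on {Ca :: real^'n. \<forall>i. Ca $ i \<ge> 0}
           (J_a M T a X Y \<beta> \<pi>B \<pi>in \<pi>out \<pi>grid \<pi>rev)"
proof -
  have "convex_on UNIV (J_a M T a X Y \<beta> \<pi>B \<pi>in \<pi>out \<pi>grid \<pi>rev)"
    using prob_space.axioms(1)[OF assms(1)] assms(2,3,6,8,7) by (rule convex_on_J_a)
  moreover have "convex {Ca :: real^'n. \<forall>i. Ca $ i \<ge> 0}"
    unfolding convex_def by auto
  ultimately show ?thesis
    using convex_on_subset subset_UNIV by blast
qed

end
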